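(* For all integers $N>r\ge 0$, the $N\times N$ discrete Fourier transform matrix $F_N$ satisfies $(r+1)\cdot\big(r+\mathcal{R}_{F_N}(r)/N\big)\ge N$, where rigidity is over $\mathbb{C}$.
   Context: $F_N\in\mathbb{C}^{N\times N}$ has entries $F_N[i,j]=\omega_N^{ij}$ for $i,j\in\{0,\dots,N-1\}$, with $\omega_N=e^{2\pi i/N}$. $\mathcal{R}_A(r)=\min\{\mathrm{nnz}(B):\mathrm{rank}(A+B)\le r\}$ is the rank-$r$ rigidity. *)

theory Defs
  imports "HOL-Analysis.Analysis" "Jordan_Normal_Form.DL_Rank"
begin

definition dft_mat :: "nat \<Rightarrow> complex mat" where
  "dft_mat N = mat N N (\<lambda>(i, j). exp (2 * pi * \<i> / of_nat N) ^ (i * j))"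

definition nnz :: "'a::zero mat \<Rightarrow> nat" where
  "nnz B = card {(i, j). i < dim_row B \<and> j < dim_col B \<and> B $$ (i, j) \<noteq> 0}"

definition rigidity :: "complex mat \<Rightarrow> nat \<Rightarrow> nat" where
  "rigidity A r = (LEAST k. \<exists>B \<in> carrier_mat (dim_row A) (dim_col A).
      nnz B = k \<and> vec_space.rank (dim_row A) (A + B) \<le> r)"

end

theory Submission
  imports Defs
begin

text \<open>Cut the columns of \<open>F\<^sub>N\<close> into \<open>\<lfloor>N/(r+1)\<rfloor>\<close> blocks of \<open>r+1\<close> consecutive
  columns. Restricted to any \<open>r+1\<close> rows, such a block is a Vandermonde matrix in distinct
  \<open>N\<close>-th roots of unity (up to row scaling), hence nonsingular. So if \<open>rank (F\<^sub>N + B) \<le> r\<close>,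
  in every block at most \<open>r\<close> rows are left untouched by \<open>B\<close>, i.e. \<open>B\<close> has at least \<open>N - r\<close>
  nonzero entries there. Hence \<open>\<R>(r) \<ge> \<lfloor>N/(r+1)\<rfloor>(N - r)\<close>, and since
  \<open>(r+1)\<lfloor>N/(r+1)\<rfloor> \<ge> N - r\<close> this gives \<open>(r+1)(r N + \<R>(r)) \<ge> r(r+1)N + (N-r)\<^sup>2 \<ge> N\<^sup>2\<close>.\<close>

lemma inj_on_dft_root_power: "inj_on (\<lambda>i. exp (2 * pi * \<i> / of_nat N) ^ i) {..<N}"
proof -
  have "exp (2 * pi * \<i> / of_nat N) ^ i = exp (2 * of_real pi * \<i> * of_nat i / of_nat N)" for i
    by (simp flip: exp_of_nat_mult add: field_simps)
  then show ?thesis using bij_betw_roots_unity[of N] by (simp add: bij_betw_def)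
qed

lemma mult_mat_vec_unit_vec:
  fixes A :: "'a::semiring_1 mat"
  assumes "A \<in> carrier_mat n nc" "j < nc"
  shows "A *\<^sub>v unit_vec nc j = col A j"
  using assms by (intro eq_vecI) (auto simp: scalar_prod_right_unit)

lemma distinct_cols_if_trivial_kernel:
  fixes C :: "'a::field mat"
  assumes C: "C \<in> carrier_mat n nc"
    and ker: "\<And>v. v \<in> carrier_vec nc \<Longrightarrow> C *\<^sub>v v = 0\<^sub>v n \<Longrightarrow> v = 0\<^sub>v nc"
  shows "distinct (cols C)"
proof (rule ccontr)
  assume "\<not> distinct (cols C)"
  then obtain a b where ab: "a < nc" "b < nc" "a \<noteq> b" "col C a = col C b"
    using C by (auto simp: distinct_conv_nth cols_nth)
  let ?v = "unit_vec nc a - unit_vec nc b :: 'a vec"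
  have "C *\<^sub>v ?v = 0\<^sub>v n"
    using ab C by (simp add: mult_minus_distrib_mat_vec mult_mat_vec_unit_vec)
  moreover have "?v \<noteq> 0\<^sub>v nc"
  proof
    assume "?v = 0\<^sub>v nc"
    then have "?v $ a = 0" using ab by simp
    with ab show False by simp
  qed
  ultimately show False using ker[of ?v] by simp
qed

lemma (in vec_space) rank_ge_if_cols_subset_trivial_kernel:
  assumes M: "M \<in> carrier_mat n m" and C: "C \<in> carrier_mat n nc"
    and sub: "set (cols C) \<subseteq> set (cols M)"
    and ker: "\<And>v. v \<in> carrier_vec nc \<Longrightarrow> C *\<^sub>v v = 0\<^sub>v n \<Longrightarrow> v = 0\<^sub>v nc"
  shows "nc \<le> rank M"
proof -
  have dist: "distinct (cols C)" by (rule distinct_cols_if_trivial_kernel[OF C ker])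
  have "lin_indpt (set (cols C))"
  proof
    assume "lin_dep (set (cols C))"
    then obtain v where "v \<in> carrier_vec nc" "v \<noteq> 0\<^sub>v nc" "C *\<^sub>v v = 0\<^sub>v n"
      using lin_depE[OF C _ dist] by blast
    with ker show False by blast
  qed
  then have "card (set (cols C)) \<le> rank M" by (rule rank_ge_card_indpt[OF M sub])
  then show ?thesis using distinct_card[OF dist] C by simp
qed

lemma coeffs_eq_0_if_vanishing_at_many_points:
  fixes c :: "nat \<Rightarrow> 'a::idom"
  assumes X: "finite X" "n \<le> card X"
    and vanish: "\<And>x. x \<in> X \<Longrightarrow> (\<Sum>b<n. c b * x ^ b) = 0"
    and b: "b < n"
  shows "c b = 0"
proof -
  define p where "p = (\<Sum>b<n. monom (c b) b)"
  have coeff_p: "coeff p k = (if k < n then c k else 0)" for k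
    unfolding p_def by (simp add: coeff_sum coeff_monom)
  have "degree p \<le> n - 1"
    by (rule degree_le) (auto simp: coeff_p)
  then have "degree p < card X" using b X by linarith
  moreover have "poly p x = poly 0 x" if "x \<in> X" for x
    using vanish[OF that] by (simp add: p_def poly_sum poly_monom)
  ultimately have "p = 0" by (intro poly_eqI_degree[of X]) auto
  then show ?thesis using coeff_p[of b] b by simp
qed

lemma dft_mat_carrier [simp]: "dft_mat N \<in> carrier_mat N N"
  by (simp add: dft_mat_def)

lemma index_dft_mat [simp]:
  "i < N \<Longrightarrow> j < N \<Longrightarrow> dft_mat N $$ (i, j) = exp (2 * pi * \<i> / of_nat N) ^ (i * j)"
  by (simp add: dft_mat_def)

lemma rank_ge_if_agrees_with_dft_on_block:
  fixes M :: "complex mat"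
  assumes M: "M \<in> carrier_mat N N" and block: "j0 + w \<le> N"
    and G: "G \<subseteq> {..<N}" "w \<le> card G"
    and agree: "\<And>i b. i \<in> G \<Longrightarrow> b < w \<Longrightarrow> M $$ (i, j0 + b) = dft_mat N $$ (i, j0 + b)"
  shows "w \<le> vec_space.rank N M"
proof -
  define \<omega> where "\<omega> = exp (2 * pi * \<i> / of_nat N :: complex)"
  define C where "C = mat N w (\<lambda>(i, b). M $$ (i, j0 + b))"
  have C: "C \<in> carrier_mat N w" unfolding C_def by simp
  have "set (cols C) \<subseteq> set (cols M)"
  proof
    fix x assume "x \<in> set (cols C)"
    then obtain b where b: "b < w" "x = col C b" using C by (auto simp: in_set_conv_nth)
    then have "x = col M (j0 + b)" using M block by (auto simp: C_def intro!: eq_vecI)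
    then show "x \<in> set (cols M)" using M b block by (auto simp: in_set_conv_nth intro!: exI[of _ "j0 + b"])
  qed
  moreover have "v = 0\<^sub>v w" if v: "v \<in> carrier_vec w" and Cv: "C *\<^sub>v v = 0\<^sub>v N" for v
  proof -
    \<comment> \<open>Row \<open>i\<close> of \<open>C\<close> is \<open>\<omega>\<^bsup>i j0\<^esup>\<close> times the powers \<open>(\<omega>\<^sup>i)\<^sup>b\<close>, so \<open>v\<close> is the coefficient
      vector of a polynomial of degree \<open>< w\<close> vanishing at the distinct points \<open>\<omega>\<^sup>i\<close>, \<open>i \<in> G\<close>.\<close>
    have vanish: "(\<Sum>b<w. v $ b * x ^ b) = 0" if x: "x \<in> (\<lambda>i. \<omega> ^ i) ` G" for x
    proof -
      obtain i where i: "i \<in> G" "x = \<omega> ^ i" using x by blast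
      have "0 = (C *\<^sub>v v) $ i" using Cv i G by auto
      also have "\<dots> = (\<Sum>b<w. C $$ (i, b) * v $ b)"
        using i G v C by (auto simp: scalar_prod_def lessThan_atLeast0)
      also have "\<dots> = (\<Sum>b<w. \<omega> ^ (i * (j0 + b)) * v $ b)"
        using i G block by (intro sum.cong) (auto simp: C_def agree \<omega>_def)
      also have "\<dots> = \<omega> ^ (i * j0) * (\<Sum>b<w. v $ b * x ^ b)"
        unfolding sum_distrib_left i(2)
        by (rule sum.cong) (simp_all add: distrib_left power_add mult.commute flip: power_mult)
      finally show ?thesis by (simp add: \<omega>_def)
    qed
    have card_roots: "card ((\<lambda>i. \<omega> ^ i) ` G) = card G"
      unfolding \<omega>_def by (rule card_image[OF inj_on_subset[OF inj_on_dft_root_power G(1)]])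
    have "finite ((\<lambda>i. \<omega> ^ i) ` G)" using G finite_subset by blast
    from coeffs_eq_0_if_vanishing_at_many_points[OF this _ vanish]
    have "v $ b = 0" if "b < w" for b
      using card_roots G(2) that by simp
    then show ?thesis using v by (intro eq_vecI) auto
  qed
  ultimately show ?thesis by (rule vec_space.rank_ge_if_cols_subset_trivial_kernel[OF M C])
qed

lemma nnz_ge_by_column_blocks:
  fixes B :: "'a::zero mat"
  assumes B: "B \<in> carrier_mat n m" and blocks: "q * w \<le> m"
    and few_zero_rows: "\<And>t. t < q \<Longrightarrow> card {i. i < n \<and> (\<forall>b<w. B $$ (i, t * w + b) = 0)} \<le> z"
  shows "q * (n - z) \<le> nnz B"
proof -
  define S where "S = {(i, j). i < n \<and> j < m \<and> B $$ (i, j) \<noteq> 0}"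
  define T where "T t = {(i, j) \<in> S. j div w = t}" for t
  have fin_S: "finite S" unfolding S_def
    by (rule finite_subset[of _ "{..<n} \<times> {..<m}"]) auto
  have fin_T: "finite (T t)" for t by (rule finite_subset[OF _ fin_S]) (auto simp: T_def)
  have card_T: "n - z \<le> card (T t)" if t: "t < q" for t
  proof -
    define Z where "Z = {i. i < n \<and> (\<forall>b<w. B $$ (i, t * w + b) = 0)}"
    have "(t + 1) * w \<le> q * w" using t by (intro mult_right_mono) auto
    have "{..<n} - Z \<subseteq> fst ` T t"
    proof
      fix i assume "i \<in> {..<n} - Z"
      then obtain b where b: "b < w" "B $$ (i, t * w + b) \<noteq> 0" and i: "i < n"
        by (auto simp: Z_def)
      have "t * w + b < m" using b(1) \<open>(t + 1) * w \<le> q * w\<close> blocks by simp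
      moreover have "(t * w + b) div w = t" using b(1) by simp
      ultimately have "(i, t * w + b) \<in> T t" using b i by (simp add: T_def S_def)
      then show "i \<in> fst ` T t" by (rule rev_image_eqI) simp
    qed
    then have "card ({..<n} - Z) \<le> card (T t)"
      using card_mono[OF finite_imageI[OF fin_T]] card_image_le[OF fin_T] by (meson order_trans)
    moreover have "card ({..<n} - Z) = n - card Z"
      by (subst card_Diff_subset) (auto simp: Z_def intro: finite_subset[of _ "{..<n}"])
    ultimately show ?thesis using few_zero_rows[OF t] by (simp add: Z_def)
  qed
  have "disjoint_family_on T {..<q}"
    by (auto simp: disjoint_family_on_def T_def)
  then have "(\<Sum>t<q. card (T t)) = card (\<Union>t<q. T t)"
    by (intro card_UN_disjoint'[symmetric]) (auto simp: fin_T)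
  also have "\<dots> \<le> card S"
    by (rule card_mono[OF fin_S]) (auto simp: T_def)
  also have "card S = nnz B"
    using B by (simp add: nnz_def S_def)
  finally show ?thesis using sum_mono[of "{..<q}" "\<lambda>_. n - z" "\<lambda>t. card (T t)"] card_T by simp
qed

lemma rigidity_attained:
  obtains B where "B \<in> carrier_mat (dim_row A) (dim_col A)" "nnz B = rigidity A r"
    "vec_space.rank (dim_row A) (A + B) \<le> r"
proof -
  let ?P = "\<lambda>k. \<exists>B \<in> carrier_mat (dim_row A) (dim_col A).
    nnz B = k \<and> vec_space.rank (dim_row A) (A + B) \<le> r"
  have "A + - A = 0\<^sub>m (dim_row A) (dim_col A)" by (intro eq_matI) simp_all
  then have "?P (nnz (- A))" by (auto simp: vec_space.rank_0I)
  then have "?P (rigidity A r)" unfolding rigidity_def by (rule LeastI)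
  with that show thesis by blast
qed

lemma rigidity_inequality_from_nnz_bound:
  fixes N r k :: nat
  assumes r: "r < N" and k: "N div (r + 1) * (N - r) \<le> k"
  shows "(real r + 1) * (real r + real k / real N) \<ge> real N"
proof -
  have "(r + 1) * (N div (r + 1)) + N mod (r + 1) = N" by (rule mult_div_mod_eq)
  moreover have "N mod (r + 1) \<le> r" using mod_less_divisor[of "r + 1" N] by linarith
  ultimately have "N - r \<le> (r + 1) * (N div (r + 1))" by linarith
  then have "(N - r) * (N - r) \<le> (r + 1) * (N div (r + 1)) * (N - r)"
    by (rule mult_right_mono) simp
  also have "\<dots> \<le> (r + 1) * k"
    unfolding mult.assoc by (rule mult_left_mono[OF k]) simp
  finally have "real ((N - r) * (N - r)) \<le> real ((r + 1) * k)"
    by (simp only: of_nat_le_iff)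
  then have square: "(real N - real r) * (real N - real r) \<le> (real r + 1) * real k"
    by (simp only: of_nat_mult of_nat_add of_nat_1 of_nat_diff[OF less_imp_le[OF r]])
  have "real r * real N \<le> real r * real r * real N"
    by (intro mult_right_mono) (cases r, auto)
  then have "real N * real N \<le> (real N - real r) * (real N - real r) + (real r + 1) * real r * real N"
    by (simp add: algebra_simps add_increasing)
  also have "\<dots> \<le> (real r + 1) * (real r * real N + real k)"
    using square by (simp add: algebra_simps)
  finally have "real N * real N \<le> (real r + 1) * (real r * real N + real k)" .
  moreover have "0 < real N" using r by simp
  ultimately show ?thesis by (simp add: field_simps)
qed

lemma card_untouched_rows_lt_if_rank_lt:
  fixes B :: "complex mat"
  assumes B: "B \<in> carrier_mat N N" and block: "j0 + w \<le> N"
    and rank: "vec_space.rank N (dft_mat N + B) < w"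
  shows "card {i. i < N \<and> (\<forall>b<w. B $$ (i, j0 + b) = 0)} < w"
proof (rule ccontr)
  let ?Z = "{i. i < N \<and> (\<forall>b<w. B $$ (i, j0 + b) = 0)}"
  assume "\<not> card ?Z < w"
  have "w \<le> vec_space.rank N (dft_mat N + B)"
  proof (rule rank_ge_if_agrees_with_dft_on_block[where G = ?Z])
    show "dft_mat N + B \<in> carrier_mat N N" using B by simp
    fix i b assume "i \<in> ?Z" "b < w"
    moreover have "j0 + b < N" using block \<open>b < w\<close> by linarith
    ultimately show "(dft_mat N + B) $$ (i, j0 + b) = dft_mat N $$ (i, j0 + b)"
      using B by simp
  qed (use block \<open>\<not> card ?Z < w\<close> in auto)
  with rank show False by simp
qed

theorem mainTheorem10:
  fixes N r :: nat
  assumes "r < N"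
  shows "(real r + 1) * (real r + real (rigidity (dft_mat N) r) / real N) \<ge> real N"
proof -
  obtain B where B: "B \<in> carrier_mat N N" "nnz B = rigidity (dft_mat N) r"
    "vec_space.rank N (dft_mat N + B) \<le> r"
    by (rule rigidity_attained[of "dft_mat N" r, unfolded carrier_matD[OF dft_mat_carrier]])
  have "N div (r + 1) * (N - r) \<le> nnz B"
  proof (rule nnz_ge_by_column_blocks[OF B(1) div_times_less_eq_dividend])
    fix t assume "t < N div (r + 1)"
    then have "(t + 1) * (r + 1) \<le> N div (r + 1) * (r + 1)" by (intro mult_right_mono) auto
    then have "t * (r + 1) + (r + 1) \<le> N" using div_times_less_eq_dividend[of N "r + 1"] by simp
    from card_untouched_rows_lt_if_rank_lt[OF B(1) this] B(3)
    show "card {i. i < N \<and> (\<forall>b<r + 1. B $$ (i, t * (r + 1) + b) = 0)} \<le> r" by simp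
  qed
  with B(2) show ?thesis by (intro rigidity_inequality_from_nnz_bound[OF assms]) simp
qed

end
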